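(* Let $\mathbb{H}=\mathbb{R}$ or $\mathbb{C}$, let $x\in\mathbb{H}^d$, and let $\{W_n\}_{n=1}^{\infty}$ be independent random subspaces of $\mathbb{H}^d$. Fix $s>0$ and assume that each $W_n$ has the common Kaczmarz bound $\alpha_s$ of order $s$ with $0<\alpha_s<1$. Fix $\epsilon\ge 0$ and let $\epsilon_n\in W_n$ satisfy $\|\epsilon_n\|\le \epsilon$ for all $n$. Let $x_0^*\in\mathbb{H}^d$ be arbitrary and define, for $n\ge1$, the noisy measurements $y_n^*=P_{W_n}(x)+\epsilon_n$ and the iterates $$x_n^*=x_{n-1}^*+y_n^*-P_{W_n}(x_{n-1}^* ).$$ Then $$\text{for all } 0<s\le 1:\qquad \mathbb{E}\|x_n^*-x\|^{2s}\le \alpha_s^{ns}\|x_0^*-x\|^{2s}+\frac{1}{1-\alpha_s^s}\,\epsilon^{2s},$$ and $$\text{for all } s\ge 1:\qquad \left(\mathbb{E}\|x_n^*-x\|^{2s}\right)^{1/s}\le \alpha_s^{n}\|x_0^*-x\|^{2}+\frac{1}{1-\alpha_s}\,\epsilon^{2}.$$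
   Context: $\mathbb{H}^d$ is $\mathbb{R}^d$ or $\mathbb{C}^d$ with the standard inner product; $\mathbb{S}^{d-1}=\{u\in\mathbb{H}^d:\|u\|=1\}$; $P_W$ denotes the orthogonal projection onto a subspace $W$. A random subspace is a random variable taking values in the set of all linear subspaces of $\mathbb{H}^d$ (dimensions need not be fixed). For $s>0$, the Kaczmarz bound of order $s$ of a random subspace $W$ is $\alpha_s=\sup_{u\in\mathbb{S}^{d-1}}\left(\mathbb{E}\left[(1-\|P_W(u)\|^2)^s\right]\right)^{1/s}\in[0,1]$. *)

theory Defs
  imports "HOL-Probability.Probability"
begin

text \<open>The scalar field H is encoded by a set K of complex scalars: K = \<real> (real case)
  or K = UNIV (complex case).  H^d is the set of vectors in complex^'d whose coordinates
  lie in K.\<close>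

definition Hspace :: "complex set \<Rightarrow> (complex ^ 'd) set" where
  "Hspace K = {v. \<forall>i. v $ i \<in> K}"

definition hinner :: "complex ^ 'd \<Rightarrow> complex ^ 'd \<Rightarrow> complex" where
  "hinner x y = (\<Sum>i\<in>UNIV. x $ i * cnj (y $ i))"

definition Hsubspace :: "complex set \<Rightarrow> (complex ^ 'd) set \<Rightarrow> bool" where
  "Hsubspace K W \<longleftrightarrow> W \<subseteq> Hspace K \<and> 0 \<in> W \<and> (\<forall>v\<in>W. \<forall>w\<in>W. v + w \<in> W)
      \<and> (\<forall>c\<in>K. \<forall>v\<in>W. c *s v \<in> W)"

definition oproj :: "(complex ^ 'd) set \<Rightarrow> complex ^ 'd \<Rightarrow> complex ^ 'd" where
  "oproj W u = (THE w. w \<in> W \<and> (\<forall>v\<in>W. hinner (u - w) v = 0))"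

text \<open>Measurable space of all subspaces of H^d: the sigma-algebra generated by the maps
  W \<mapsto> P_W(u) (equivalently, by the entries of the projection matrix P_W).\<close>
definition subspaces :: "complex set \<Rightarrow> (complex ^ 'd) set measure" where
  "subspaces K = sigma {W. Hsubspace K W}
     {{W. Hsubspace K W \<and> oproj W u \<in> B} | u B. B \<in> sets borel}"

definition kaczmarz_bound ::
    "'w measure \<Rightarrow> complex set \<Rightarrow> real \<Rightarrow> ('w \<Rightarrow> (complex ^ 'd) set) \<Rightarrow> real" where
  "kaczmarz_bound M K s V =
     (SUP u\<in>{u\<in>Hspace K. norm u = 1}.
        (\<integral>\<omega>. (1 - (norm (oproj (V \<omega>) u))\<^sup>2) powr s \<partial>M) powr (1 / s))"

definition history ::
    "'w measure \<Rightarrow> complex set \<Rightarrow> (nat \<Rightarrow> 'w \<Rightarrow> (complex ^ 'd) set) \<Rightarrow> nat \<Rightarrow> 'w measure" where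
  "history M K W n = sigma (space M)
     (\<Union>k\<in>{1..n}. {W k -` A \<inter> space M | A. A \<in> sets (subspaces K)})"

end

theory Submission
  imports Defs
begin

text \<open>Write \<open>e_n = x_n - x\<close>. The update reads \<open>e_n = (I - P_{W_n}) e_{n-1} + \<epsilon>_n\<close> with
  \<open>\<epsilon>_n \<in> W_n\<close> orthogonal to the first term, so
  \<open>\<parallel>e_n\<parallel>\<^sup>2 = \<parallel>(I - P_{W_n}) e_{n-1}\<parallel>\<^sup>2 + \<parallel>\<epsilon>_n\<parallel>\<^sup>2\<close>.
  Since \<open>e_{n-1}\<close> is a function of \<open>W_1, \<dots>, W_{n-1}\<close>, it is independent of \<open>W_n\<close>, and
  applying the Kaczmarz bound to the unit vector \<open>e_{n-1} / \<parallel>e_{n-1}\<parallel>\<close> for each fixed value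
  of \<open>e_{n-1}\<close> gives \<open>E \<parallel>(I - P_{W_n}) e_{n-1}\<parallel>^{2s} \<le> \<alpha>^s E \<parallel>e_{n-1}\<parallel>^{2s}\<close>.
  For \<open>s \<le> 1\<close>, subadditivity of \<open>t \<mapsto> t^s\<close> turns this into the linear recursion
  \<open>c_n \<le> \<alpha>^s c_{n-1} + \<epsilon>^{2s}\<close> for \<open>c_n = E \<parallel>e_n\<parallel>^{2s}\<close>; for \<open>s \<ge> 1\<close>, Minkowski's
  inequality in \<open>L^s\<close> gives \<open>c_n^{1/s} \<le> \<alpha> c_{n-1}^{1/s} + \<epsilon>\<^sup>2\<close>.\<close>

section \<open>Orthogonal projections in \<open>H^d\<close>\<close>

lemma inner_eq_Re_hinner: "inner v w = Re (hinner v w)" for v w :: "complex ^ 'd"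
  by (simp add: inner_vec_def hinner_def Re_sum inner_complex_def)

lemma Re_hinner_self: "Re (hinner v v) = (norm v)\<^sup>2" for v :: "complex ^ 'd"
  by (simp add: power2_norm_eq_inner inner_eq_Re_hinner)

lemma hinner_diff_left: "hinner (a - b) c = hinner a c - hinner b c"
  by (simp add: hinner_def algebra_simps sum_subtractf)

lemma hinner_add_left: "hinner (a + b) c = hinner a c + hinner b c"
  by (simp add: hinner_def algebra_simps sum.distrib)

lemma hinner_scaleR_left: "hinner (r *\<^sub>R a) c = of_real r * hinner a c"
  by (simp add: hinner_def sum_distrib_left algebra_simps scaleR_conv_of_real[where 'a = complex])

lemma scaleR_eq_of_real_vector_mult: "r *\<^sub>R v = complex_of_real r *s v" for v :: "complex ^ 'd"
  by (simp add: vec_eq_iff scaleR_conv_of_real[where 'a = complex])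

locale scalar_field =
  fixes K :: "complex set"
  assumes real_or_complex: "K = \<real> \<or> K = UNIV"
begin

lemma of_real_in_scalars: "complex_of_real r \<in> K"
  using real_or_complex by auto

lemma zero_in_scalars [simp]: "0 \<in> K" and one_in_scalars [simp]: "1 \<in> K"
  using of_real_in_scalars[of 0] of_real_in_scalars[of 1] by simp_all

lemma Hspace_add: "u \<in> Hspace K \<Longrightarrow> v \<in> Hspace K \<Longrightarrow> u + v \<in> Hspace K"
  using real_or_complex by (auto simp: Hspace_def)

lemma Hspace_diff: "u \<in> Hspace K \<Longrightarrow> v \<in> Hspace K \<Longrightarrow> u - v \<in> Hspace K"
  using real_or_complex by (auto simp: Hspace_def)

lemma Hspace_scaleR: "u \<in> Hspace K \<Longrightarrow> r *\<^sub>R u \<in> Hspace K"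
  using real_or_complex by (auto simp: Hspace_def scaleR_conv_of_real[where 'a = complex])

lemma zero_in_Hspace: "0 \<in> Hspace K"
  by (simp add: Hspace_def)

lemma axis_in_Hspace: "c \<in> K \<Longrightarrow> axis i c \<in> Hspace K"
  by (simp add: Hspace_def axis_def)

lemma Hspace_sum: "finite A \<Longrightarrow> (\<And>i. i \<in> A \<Longrightarrow> f i \<in> Hspace K) \<Longrightarrow> sum f A \<in> Hspace K"
  by (induction A rule: finite_induct) (auto simp: zero_in_Hspace Hspace_add)

context
  fixes V :: "(complex ^ 'd) set"
  assumes V: "Hsubspace K V"
begin

lemma Hsubspace_subset_Hspace: "V \<subseteq> Hspace K"
  using V by (simp add: Hsubspace_def)

lemma Hsubspace_scaleR: "v \<in> V \<Longrightarrow> r *\<^sub>R v \<in> V"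
  using V of_real_in_scalars by (simp add: Hsubspace_def scaleR_eq_of_real_vector_mult)

lemma Hsubspace_add: "v \<in> V \<Longrightarrow> w \<in> V \<Longrightarrow> v + w \<in> V"
  using V by (simp add: Hsubspace_def)

lemma Hsubspace_diff: "v \<in> V \<Longrightarrow> w \<in> V \<Longrightarrow> v - w \<in> V"
  using Hsubspace_add[of v "(-1) *\<^sub>R w"] Hsubspace_scaleR[of w "-1"] by simp

lemma subspace_Hsubspace: "subspace V"
  using V Hsubspace_add Hsubspace_scaleR unfolding subspace_def Hsubspace_def by blast

lemma oproj_unique:
  assumes "w \<in> V" "\<forall>v\<in>V. hinner (u - w) v = 0"
  shows "oproj V u = w"
  unfolding oproj_def
proof (rule the_equality)
  show "w \<in> V \<and> (\<forall>v\<in>V. hinner (u - w) v = 0)"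
    using assms by blast
next
  fix w' assume w': "w' \<in> V \<and> (\<forall>v\<in>V. hinner (u - w') v = 0)"
  have d: "w - w' \<in> V"
    using Hsubspace_diff assms w' by blast
  have "hinner (w - w') (w - w') = hinner (u - w') (w - w') - hinner (u - w) (w - w')"
    by (simp add: hinner_diff_left[symmetric])
  also have "\<dots> = 0"
    using d assms w' by simp
  finally have "(norm (w - w'))\<^sup>2 = 0"
    using Re_hinner_self[of "w - w'"] by simp
  then show "w' = w"
    by simp
qed

lemma oproj_characterization:
  assumes u: "u \<in> Hspace K"
  shows "oproj V u \<in> V \<and> (\<forall>v\<in>V. hinner (u - oproj V u) v = 0)"
proof -
  obtain y z where y: "y \<in> V" and z: "\<And>w. w \<in> V \<Longrightarrow> orthogonal z w" and uyz: "u = y + z"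
    using orthogonal_subspace_decomp_exists[of V u] span_eq_iff[THEN iffD2, OF subspace_Hsubspace]
    by metis
  have "hinner z v = 0" if v: "v \<in> V" for v
  proof (rule complex_eqI)
    show "Re (hinner z v) = Re 0"
      using z[OF v] by (simp add: orthogonal_def inner_eq_Re_hinner)
    show "Im (hinner z v) = Im 0"
      using real_or_complex
    proof
      assume "K = \<real>"
      moreover have "z \<in> Hspace K" "v \<in> Hspace K"
        using uyz u y v Hsubspace_subset_Hspace Hspace_diff[of u y] by auto
      ultimately have "hinner z v \<in> \<real>"
        unfolding hinner_def
        by (auto simp: Hspace_def Reals_cnj_iff intro!: sum_in_Reals Reals_mult)
      then show ?thesis
        by (simp add: complex_is_Real_iff)
    next
      text \<open>In the complex case the imaginary part is the real inner product with \<open>\<i> v\<close>.\<close>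
      assume "K = UNIV"
      then have "\<i> *s v \<in> V"
        using V v by (simp add: Hsubspace_def)
      moreover have "hinner z (\<i> *s v) = - \<i> * hinner z v"
        by (simp add: hinner_def sum_distrib_left algebra_simps)
      ultimately show ?thesis
        using z[of "\<i> *s v"] by (simp add: orthogonal_def inner_eq_Re_hinner)
    qed
  qed
  then show ?thesis
    using oproj_unique[of y u] y uyz by simp
qed

lemma oproj_in_Hsubspace: "u \<in> Hspace K \<Longrightarrow> oproj V u \<in> V"
  using oproj_characterization by blast

lemma oproj_in_Hspace: "u \<in> Hspace K \<Longrightarrow> oproj V u \<in> Hspace K"
  using oproj_in_Hsubspace Hsubspace_subset_Hspace by blast

lemma oproj_orthogonal: "u \<in> Hspace K \<Longrightarrow> v \<in> V \<Longrightarrow> orthogonal (u - oproj V u) v"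
  using oproj_characterization by (simp add: orthogonal_def inner_eq_Re_hinner)

lemma oproj_add:
  assumes "u \<in> Hspace K" "v \<in> Hspace K"
  shows "oproj V (u + v) = oproj V u + oproj V v"
proof (rule oproj_unique)
  show "oproj V u + oproj V v \<in> V"
    using assms oproj_in_Hsubspace Hsubspace_add by blast
  show "\<forall>w\<in>V. hinner (u + v - (oproj V u + oproj V v)) w = 0"
  proof
    fix w assume "w \<in> V"
    moreover have "u + v - (oproj V u + oproj V v) = (u - oproj V u) + (v - oproj V v)"
      by simp
    ultimately show "hinner (u + v - (oproj V u + oproj V v)) w = 0"
      using assms oproj_characterization by (simp only: hinner_add_left) simp
  qed
qed

lemma oproj_scaleR:
  assumes "u \<in> Hspace K"
  shows "oproj V (r *\<^sub>R u) = r *\<^sub>R oproj V u"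
proof (rule oproj_unique)
  show "r *\<^sub>R oproj V u \<in> V"
    using assms oproj_in_Hsubspace Hsubspace_scaleR by blast
  have "r *\<^sub>R u - r *\<^sub>R oproj V u = r *\<^sub>R (u - oproj V u)"
    by (simp add: algebra_simps)
  then show "\<forall>w\<in>V. hinner (r *\<^sub>R u - r *\<^sub>R oproj V u) w = 0"
    using assms oproj_characterization by (simp add: hinner_scaleR_left)
qed

lemma oproj_diff:
  assumes "u \<in> Hspace K" "v \<in> Hspace K"
  shows "oproj V (u - v) = oproj V u - oproj V v"
proof -
  have "oproj V u = oproj V (u - v) + oproj V v"
    using oproj_add[OF Hspace_diff[OF assms] assms(2)] by simp
  then show ?thesis
    by simp
qed

lemma oproj_zero: "oproj V 0 = 0"
  using oproj_scaleR[OF zero_in_Hspace, of 0] by simp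

lemma oproj_sum:
  "finite A \<Longrightarrow> (\<And>i. i \<in> A \<Longrightarrow> f i \<in> Hspace K) \<Longrightarrow> oproj V (sum f A) = (\<Sum>i\<in>A. oproj V (f i))"
  by (induction A rule: finite_induct) (simp_all add: oproj_zero oproj_add Hspace_sum)

lemma norm_oproj_Pythagorean:
  assumes "u \<in> Hspace K"
  shows "(norm u)\<^sup>2 = (norm (u - oproj V u))\<^sup>2 + (norm (oproj V u))\<^sup>2"
  using norm_add_Pythagorean[OF oproj_orthogonal[OF assms oproj_in_Hsubspace[OF assms]]] by simp

lemma one_minus_norm_oproj_sq:
  assumes "u \<in> Hspace K" "norm u = 1"
  shows "1 - (norm (oproj V u))\<^sup>2 = (norm (u - oproj V u))\<^sup>2"
  using norm_oproj_Pythagorean[OF assms(1)] assms(2) by simp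

lemma one_minus_norm_oproj_sq_powr_le_1:
  assumes "u \<in> Hspace K" "norm u = 1" and "0 < s"
  shows "(1 - (norm (oproj V u))\<^sup>2) powr s \<le> 1"
proof -
  have "0 \<le> 1 - (norm (oproj V u))\<^sup>2"
    by (simp only: one_minus_norm_oproj_sq[OF assms(1,2)]) simp
  then show ?thesis
    using assms(3) by (intro powr_le1) auto
qed

end

end

section \<open>Measurability of projections\<close>

text \<open>The projection expressed through the projections of the fixed vectors \<open>axis i 1\<close> and
  \<open>axis i \<i>\<close>: it agrees with \<open>oproj\<close> on \<open>H^d\<close>, and it is visibly jointly
  measurable in the subspace and the vector.\<close>

definition proj_by_basis :: "(complex ^ 'd) set \<Rightarrow> complex ^ 'd \<Rightarrow> complex ^ 'd" where
  "proj_by_basis V y =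
     (\<Sum>i\<in>UNIV. Re (y $ i) *\<^sub>R oproj V (axis i 1) + Im (y $ i) *\<^sub>R oproj V (axis i \<i>))"

lemma (in scalar_field) proj_by_basis_eq:
  assumes V: "Hsubspace K V" and y: "y \<in> Hspace K"
  shows "proj_by_basis V y = oproj V y"
proof -
  have axis: "oproj V (axis i c) = Re c *\<^sub>R oproj V (axis i 1) + Im c *\<^sub>R oproj V (axis i \<i>)"
    if c: "c \<in> K" for i c
    using real_or_complex
  proof
    assume "K = \<real>"
    then have "Im c = 0"
      using c by (simp add: complex_is_Real_iff)
    then have "axis i c = Re c *\<^sub>R axis i 1"
      by (simp add: vec_eq_iff axis_def scaleR_conv_of_real[where 'a = complex] complex_eq_iff)
    then show ?thesis
      using \<open>Im c = 0\<close> oproj_scaleR[OF V axis_in_Hspace[OF one_in_scalars]] by simp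
  next
    assume "K = UNIV"
    then have "axis i 1 \<in> Hspace K" "axis i \<i> \<in> Hspace K"
      using axis_in_Hspace by auto
    moreover have "axis i c = Re c *\<^sub>R axis i 1 + Im c *\<^sub>R axis i \<i>"
      by (simp add: vec_eq_iff axis_def scaleR_conv_of_real[where 'a = complex] complex_eq_iff)
    ultimately show ?thesis
      using oproj_add[OF V] oproj_scaleR[OF V] Hspace_scaleR by metis
  qed
  have y_i: "y $ i \<in> K" for i
    using y by (simp add: Hspace_def)
  have y_sum: "(\<Sum>i\<in>UNIV. axis i (y $ i)) = y"
    by (simp add: vec_eq_iff sum_component axis_def)
  have "oproj V y = (\<Sum>i\<in>UNIV. oproj V (axis i (y $ i)))"
    using oproj_sum[OF V, of UNIV "\<lambda>i. axis i (y $ i)"] unfolding y_sum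
    by (simp add: axis_in_Hspace y_i)
  also have "\<dots> = proj_by_basis V y"
    unfolding proj_by_basis_def using axis[OF y_i] by simp
  finally show ?thesis
    by simp
qed

lemma space_subspaces: "space (subspaces K) = {V. Hsubspace K V}"
  unfolding subspaces_def by (simp add: space_measure_of_conv)

lemma sets_subspaces:
  "sets (subspaces K) = sigma_sets {V. Hsubspace K V}
     {{V. Hsubspace K V \<and> oproj V u \<in> B} | u B. B \<in> sets borel}"
  unfolding subspaces_def by (subst sets_measure_of) auto

lemma oproj_measurable [measurable]: "(\<lambda>V. oproj V u) \<in> borel_measurable (subspaces K)"
  for u :: "complex ^ 'd"
proof (rule measurableI)
  fix A :: "(complex ^ 'd) set" assume "A \<in> sets borel"
  then have "{V. Hsubspace K V \<and> oproj V u \<in> A} \<in> sets (subspaces K)"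
    unfolding sets_subspaces by (intro sigma_sets.Basic) blast
  moreover have "(\<lambda>V. oproj V u) -` A \<inter> space (subspaces K) = {V. Hsubspace K V \<and> oproj V u \<in> A}"
    by (auto simp: space_subspaces)
  ultimately show "(\<lambda>V. oproj V u) -` A \<inter> space (subspaces K) \<in> sets (subspaces K)"
    by simp
qed simp

lemma borel_measurable_vec_nth [measurable]:
  "(\<lambda>x :: 'a :: topological_space ^ 'n. x $ i) \<in> borel_measurable borel"
  by (intro borel_measurable_continuous_onI continuous_on_component continuous_on_id)

lemma proj_by_basis_measurable [measurable]:
  "(\<lambda>p. proj_by_basis (snd p) (fst p)) \<in> borel_measurable (borel \<Otimes>\<^sub>M subspaces K)"
proof -
  have coordinate: "(\<lambda>p. (fst p :: complex ^ 'd) $ i) \<in> borel_measurable (borel \<Otimes>\<^sub>M subspaces K)"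
    for i
    by (rule measurable_compose[OF measurable_fst borel_measurable_vec_nth])
  have "(\<lambda>p. oproj (snd p) u) \<in> borel_measurable (borel \<Otimes>\<^sub>M subspaces K)" for u :: "complex ^ 'd"
    using measurable_compose[OF measurable_snd oproj_measurable] .
  then show ?thesis
    unfolding proj_by_basis_def
    by (intro borel_measurable_sum borel_measurable_add borel_measurable_scaleR
        measurable_compose[OF coordinate borel_measurable_Re]
        measurable_compose[OF coordinate borel_measurable_Im])
qed

section \<open>Real inequalities\<close>

lemma powr_mult_2: "0 \<le> a \<Longrightarrow> a powr (2 * s) = (a\<^sup>2) powr s"
  for a s :: real
  by (simp add: powr_powr[symmetric] powr_realpow')

lemma powr_add_le_add_powr:
  fixes a b s :: real
  assumes a: "0 \<le> a" and b: "0 \<le> b" and s: "0 < s" "s \<le> 1"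
  shows "(a + b) powr s \<le> a powr s + b powr s"
proof (cases "a + b = 0")
  case True
  then show ?thesis
    using a b by simp
next
  case False
  then have S: "a + b > 0"
    using a b by simp
  have frac_le: "z / (a + b) \<le> (z / (a + b)) powr s" if "0 \<le> z" "z \<le> a + b" for z
    using powr_mono'[of s 1 "z / (a + b)"] that s S by simp
  have "1 = a / (a + b) + b / (a + b)"
    using S by (simp add: add_divide_distrib[symmetric])
  also have "\<dots> \<le> (a / (a + b)) powr s + (b / (a + b)) powr s"
    using frac_le[of a] frac_le[of b] a b by simp
  also have "\<dots> = (a powr s + b powr s) / (a + b) powr s"
    by (simp only: powr_divide add_divide_distrib)
  finally show ?thesis
    using S by (simp add: field_simps)
qed

text \<open>Convexity of \<open>z \<mapsto> z powr s\<close> at the points \<open>x / (1 - t)\<close> and \<open>y / t\<close>.\<close>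

lemma powr_add_le_weighted:
  fixes x y t s :: real
  assumes x: "0 \<le> x" and y: "0 \<le> y" and t: "0 < t" "t < 1" and s: "1 \<le> s"
  shows "(x + y) powr s \<le> (1 - t) powr (1 - s) * x powr s + t powr (1 - s) * y powr s"
proof -
  have weight_ge_1: "1 \<le> r powr (1 - s)" if "0 < r" "r \<le> 1" for r :: real
    using powr_mono'[of "1 - s" 0 r] that s by simp
  consider "x = 0" | "y = 0" | "0 < x" "0 < y"
    using x y by linarith
  then show ?thesis
  proof cases
    case 1
    then show ?thesis
      using weight_ge_1[of t] t by (simp add: mult_le_cancel_right1)
  next
    case 2
    then show ?thesis
      using weight_ge_1[of "1 - t"] t by (simp add: mult_le_cancel_right1)
  next
    case 3
    have scaled: "r * (z / r) powr s = r powr (1 - s) * z powr s" if "0 < r" for r z :: real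
      using that by (simp add: powr_divide powr_diff)
    have "((1 - t) *\<^sub>R (x / (1 - t)) + t *\<^sub>R (y / t)) powr s
          \<le> (1 - t) * (x / (1 - t)) powr s + t * (y / t) powr s"
      using t 3 by (intro convex_onD[OF powr_convex[OF s]]) auto
    moreover have "(1 - t) *\<^sub>R (x / (1 - t)) + t *\<^sub>R (y / t) = x + y"
      using t by simp
    ultimately show ?thesis
      using scaled[of "1 - t" x] scaled[of t y] t by simp
  qed
qed

lemma linear_recurrence_bound:
  fixes a :: "nat \<Rightarrow> real"
  assumes step: "\<And>n. a (Suc n) \<le> q * a n + e" and q: "0 \<le> q" "q < 1" and e: "0 \<le> e"
  shows "a n \<le> q ^ n * a 0 + e / (1 - q)"
proof (induction n)
  case 0
  show ?case
    using e q by simp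
next
  case (Suc n)
  have "a (Suc n) \<le> q * (q ^ n * a 0 + e / (1 - q)) + e"
    using step[of n] mult_left_mono[OF Suc.IH q(1)] by linarith
  also have "\<dots> = q ^ Suc n * a 0 + e / (1 - q)"
    using q by (simp add: field_simps)
  finally show ?case .
qed

section \<open>Minkowski and Fubini on a probability space\<close>

lemma (in prob_space) integrable_powr_add_const:
  fixes f :: "'a \<Rightarrow> real"
  assumes f: "f \<in> borel_measurable M" "\<And>\<omega>. \<omega> \<in> space M \<Longrightarrow> 0 \<le> f \<omega>"
    and f_int: "integrable M (\<lambda>\<omega>. f \<omega> powr s)" and s: "1 \<le> s" and e: "0 \<le> e"
  shows "integrable M (\<lambda>\<omega>. (f \<omega> + e) powr s)"
proof (rule Bochner_Integration.integrable_bound)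
  show "integrable M (\<lambda>\<omega>. 2 powr (s - 1) * f \<omega> powr s + 2 powr (s - 1) * e powr s)"
    using f_int by simp
  show "(\<lambda>\<omega>. (f \<omega> + e) powr s) \<in> borel_measurable M"
    using f(1) by measurable
  have half: "(1 / 2 :: real) powr (1 - s) = 2 powr (s - 1)"
    by (simp add: powr_divide powr_minus_divide[symmetric])
  have "(f \<omega> + e) powr s \<le> 2 powr (s - 1) * f \<omega> powr s + 2 powr (s - 1) * e powr s"
    if "\<omega> \<in> space M" for \<omega>
    using powr_add_le_weighted[of "f \<omega>" e "1 / 2" s] f(2)[OF that] s e half by simp
  then show "AE \<omega> in M. norm ((f \<omega> + e) powr s)
               \<le> norm (2 powr (s - 1) * f \<omega> powr s + 2 powr (s - 1) * e powr s)"
    by (intro AE_I2) simp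
qed

text \<open>Minkowski's inequality in \<open>L^s\<close> for \<open>f + e\<close> with a constant \<open>e\<close>. For \<open>a, e > 0\<close>
  the weights of \<open>powr_add_le_weighted\<close> with \<open>t = e / (a + e)\<close> make it sharp.\<close>

lemma (in prob_space) integral_powr_add_const_le:
  fixes f :: "'a \<Rightarrow> real"
  assumes f: "f \<in> borel_measurable M" "\<And>\<omega>. \<omega> \<in> space M \<Longrightarrow> 0 \<le> f \<omega>"
    and f_int: "integrable M (\<lambda>\<omega>. f \<omega> powr s)" and s: "1 \<le> s" and e: "0 \<le> e"
    and a: "0 \<le> a" and f_le: "(\<integral>\<omega>. f \<omega> powr s \<partial>M) \<le> a powr s"
  shows "(\<integral>\<omega>. (f \<omega> + e) powr s \<partial>M) \<le> (a + e) powr s"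
proof -
  have sum_int: "integrable M (\<lambda>\<omega>. (f \<omega> + e) powr s)"
    using integrable_powr_add_const[OF f f_int s e] .
  consider "a = 0" | "e = 0" | "0 < a" "0 < e"
    using a e by linarith
  then show ?thesis
  proof cases
    case 1
    have "(\<integral>\<omega>. f \<omega> powr s \<partial>M) = 0"
      using f_le 1 s by (intro antisym) (auto intro: integral_nonneg_AE)
    then have "AE \<omega> in M. f \<omega> powr s = 0"
      using integral_nonneg_eq_0_iff_AE[OF f_int] by simp
    moreover have "AE \<omega> in M. 0 \<le> f \<omega>"
      using f(2) by (rule AE_I2)
    ultimately have "AE \<omega> in M. (f \<omega> + e) powr s = e powr s"
      by eventually_elim simp
    then have "(\<integral>\<omega>. (f \<omega> + e) powr s \<partial>M) = (\<integral>\<omega>. e powr s \<partial>M)"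
      using sum_int by (intro integral_cong_AE) auto
    then show ?thesis
      using 1 by (simp add: prob_space)
  next
    case 2
    then show ?thesis
      using f_le by simp
  next
    case 3
    define t where "t = e / (a + e)"
    have t: "0 < t" "t < 1"
      using 3 by (auto simp: t_def field_simps)
    have one_minus_t: "1 - t = a / (a + e)"
      using 3 by (simp add: t_def field_simps)
    have weighted: "(z / (a + e)) powr (1 - s) * z powr s = z / (a + e) powr (1 - s)"
      if "0 < z" for z
      using that by (simp add: powr_divide powr_add[symmetric])
    have "(\<integral>\<omega>. (f \<omega> + e) powr s \<partial>M)
          \<le> (\<integral>\<omega>. (1 - t) powr (1 - s) * f \<omega> powr s + t powr (1 - s) * e powr s \<partial>M)"
      using f_int sum_int powr_add_le_weighted[OF f(2) e t s] by (intro integral_mono) auto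
    also have "\<dots> \<le> (1 - t) powr (1 - s) * a powr s + t powr (1 - s) * e powr s"
      using f_int f_le by (simp add: prob_space mult_left_mono)
    also have "\<dots> = (a + e) / (a + e) powr (1 - s)"
      using 3 weighted[of a] weighted[of e] unfolding one_minus_t unfolding t_def
      by (simp add: add_divide_distrib)
    also have "\<dots> = (a + e) powr s"
      using 3 powr_diff[of "a + e" 1 "1 - s"] by simp
    finally show ?thesis .
  qed
qed

text \<open>Unlike \<open>indep_var\<close>, which forces both variables to have the same type, this allows
  random variables of different types.\<close>

lemma (in prob_space) distr_Pair_eq_pair_measure:
  assumes X: "random_variable S X" and Y: "random_variable T Y"
    and indep: "indep_set (sigma_sets (space M) {X -` A \<inter> space M | A. A \<in> sets S})
                          (sigma_sets (space M) {Y -` B \<inter> space M | B. B \<in> sets T})"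
  shows "distr M S X \<Otimes>\<^sub>M distr M T Y = distr M (S \<Otimes>\<^sub>M T) (\<lambda>\<omega>. (X \<omega>, Y \<omega>))"
proof -
  interpret X: prob_space "distr M S X"
    by (rule prob_space_distr[OF X])
  interpret Y: prob_space "distr M T Y"
    by (rule prob_space_distr[OF Y])
  show ?thesis
  proof (rule pair_measure_eqI)
    show "sigma_finite_measure (distr M S X)" "sigma_finite_measure (distr M T Y)" ..
    fix A B assume A: "A \<in> sets (distr M S X)" and B: "B \<in> sets (distr M T Y)"
    have "X -` A \<inter> space M \<in> sigma_sets (space M) {X -` A \<inter> space M | A. A \<in> sets S}"
      "Y -` B \<inter> space M \<in> sigma_sets (space M) {Y -` B \<inter> space M | B. B \<in> sets T}"
      using A B by (auto intro: sigma_sets.Basic)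
    then have "prob (X -` A \<inter> space M \<inter> (Y -` B \<inter> space M)) = prob (X -` A \<inter> space M) * prob (Y -` B \<inter> space M)"
      using indep unfolding indep_sets2_eq by blast
    moreover have "(\<lambda>\<omega>. (X \<omega>, Y \<omega>)) -` (A \<times> B) \<inter> space M = X -` A \<inter> space M \<inter> (Y -` B \<inter> space M)"
      by auto
    ultimately show "emeasure (distr M S X) A * emeasure (distr M T Y) B
                     = emeasure (distr M (S \<Otimes>\<^sub>M T) (\<lambda>\<omega>. (X \<omega>, Y \<omega>))) (A \<times> B)"
      using X Y A B
      by (simp add: emeasure_distr measurable_Pair emeasure_eq_measure ennreal_mult' measure_nonneg)
  qed simp
qed

lemma (in prob_space) nn_integral_indep_pair:
  assumes X: "random_variable S X" and Y: "random_variable T Y"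
    and indep: "indep_set (sigma_sets (space M) {X -` A \<inter> space M | A. A \<in> sets S})
                          (sigma_sets (space M) {Y -` B \<inter> space M | B. B \<in> sets T})"
    and h: "h \<in> borel_measurable (S \<Otimes>\<^sub>M T)"
  shows "(\<integral>\<^sup>+\<omega>. h (X \<omega>, Y \<omega>) \<partial>M) = (\<integral>\<^sup>+\<omega>. (\<integral>\<^sup>+\<omega>'. h (X \<omega>, Y \<omega>') \<partial>M) \<partial>M)"
proof -
  note product = distr_Pair_eq_pair_measure[OF X Y indep]
  interpret Y: prob_space "distr M T Y"
    by (rule prob_space_distr[OF Y])
  have "sets (distr M S X \<Otimes>\<^sub>M distr M T Y) = sets (S \<Otimes>\<^sub>M T)"
    by (rule sets_pair_measure_cong) simp_all
  then have h': "h \<in> borel_measurable (distr M S X \<Otimes>\<^sub>M distr M T Y)"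
    using h measurable_cong_sets by blast
  have inner: "(\<integral>\<^sup>+y. h (x, y) \<partial>distr M T Y) = (\<integral>\<^sup>+\<omega>'. h (x, Y \<omega>') \<partial>M)"
    if "x \<in> space S" for x
    using measurable_Pair2[OF h that] by (simp add: nn_integral_distr[OF Y])
  have "(\<integral>\<^sup>+\<omega>. h (X \<omega>, Y \<omega>) \<partial>M) = (\<integral>\<^sup>+p. h p \<partial>distr M (S \<Otimes>\<^sub>M T) (\<lambda>\<omega>. (X \<omega>, Y \<omega>)))"
    using h by (simp add: nn_integral_distr measurable_Pair[OF X Y])
  also have "\<dots> = (\<integral>\<^sup>+x. (\<integral>\<^sup>+y. h (x, y) \<partial>distr M T Y) \<partial>distr M S X)"
    by (simp only: product[symmetric] Y.nn_integral_fst[OF h'])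
  also have "\<dots> = (\<integral>\<^sup>+x. (\<integral>\<^sup>+\<omega>'. h (x, Y \<omega>') \<partial>M) \<partial>distr M S X)"
    by (rule nn_integral_cong) (simp add: inner)
  also have "\<dots> = (\<integral>\<^sup>+\<omega>. (\<integral>\<^sup>+\<omega>'. h (X \<omega>, Y \<omega>') \<partial>M) \<partial>M)"
  proof -
    have "(\<lambda>x. \<integral>\<^sup>+y. h (x, y) \<partial>distr M T Y) \<in> borel_measurable S"
      using Y.borel_measurable_nn_integral_fst[OF h'] by simp
    then have "(\<lambda>x. \<integral>\<^sup>+\<omega>'. h (x, Y \<omega>') \<partial>M) \<in> borel_measurable S"
      by (rule measurable_cong[THEN iffD1, rotated]) (simp add: inner)
    then show ?thesis
      using nn_integral_distr[OF X] by simp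
  qed
  finally show ?thesis .
qed

section \<open>Random subspaces\<close>

locale subspace_prob_space = scalar_field K + prob_space M
  for K :: "complex set" and M :: "'w measure"
begin

lemma Hsubspace_random:
  "V \<in> measurable M (subspaces K) \<Longrightarrow> \<omega> \<in> space M \<Longrightarrow> Hsubspace K (V \<omega>)"
  using measurable_space[of V M "subspaces K" \<omega>] by (simp add: space_subspaces)

lemma integrable_kaczmarz_integrand:
  assumes V: "V \<in> measurable M (subspaces K)" and s: "0 < s"
    and u: "u \<in> Hspace K" "norm u = 1"
  shows "integrable M (\<lambda>\<omega>. (1 - (norm (oproj (V \<omega>) u))\<^sup>2) powr s)"
proof (rule integrable_const_bound[where B = 1])
  have [measurable]: "(\<lambda>\<omega>. oproj (V \<omega>) u) \<in> borel_measurable M"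
    using measurable_compose[OF V oproj_measurable] .
  show "(\<lambda>\<omega>. (1 - (norm (oproj (V \<omega>) u))\<^sup>2) powr s) \<in> borel_measurable M"
    by measurable
  show "AE \<omega> in M. norm ((1 - (norm (oproj (V \<omega>) u))\<^sup>2) powr s) \<le> 1"
    using one_minus_norm_oproj_sq_powr_le_1[OF Hsubspace_random[OF V] u s] by (intro AE_I2) simp
qed

lemma integral_le_kaczmarz_bound:
  assumes V: "V \<in> measurable M (subspaces K)" and s: "0 < s"
    and u: "u \<in> Hspace K" "norm u = 1"
  shows "(\<integral>\<omega>. (1 - (norm (oproj (V \<omega>) u))\<^sup>2) powr s \<partial>M) \<le> kaczmarz_bound M K s V powr s"
proof -
  let ?F = "\<lambda>u. (\<integral>\<omega>. (1 - (norm (oproj (V \<omega>) u))\<^sup>2) powr s \<partial>M) powr (1 / s)"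
  have "?F v \<le> 1" if "v \<in> Hspace K" "norm v = 1" for v
  proof -
    have "(\<integral>\<omega>. (1 - (norm (oproj (V \<omega>) v))\<^sup>2) powr s \<partial>M) \<le> (\<integral>\<omega>. 1 \<partial>M)"
      using integrable_kaczmarz_integrand[OF V s that]
        one_minus_norm_oproj_sq_powr_le_1[OF Hsubspace_random[OF V] that s]
      by (intro integral_mono) auto
    then show ?thesis
      using s by (intro powr_le1) (auto simp: prob_space)
  qed
  then have "bdd_above (?F ` {u \<in> Hspace K. norm u = 1})"
    by (intro bdd_aboveI[where M = 1]) auto
  then have "?F u \<le> kaczmarz_bound M K s V"
    unfolding kaczmarz_bound_def using u by (intro cSUP_upper) auto
  then have "?F u powr s \<le> kaczmarz_bound M K s V powr s"
    using s by (intro powr_mono2) auto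
  then show ?thesis
    using s by (simp add: powr_powr)
qed

lemma nn_integral_residual_le:
  assumes V: "V \<in> measurable M (subspaces K)" and s: "0 < s" and y: "y \<in> Hspace K"
  shows "(\<integral>\<^sup>+\<omega>. ennreal (norm (y - oproj (V \<omega>) y) powr (2 * s)) \<partial>M)
         \<le> ennreal (kaczmarz_bound M K s V powr s * norm y powr (2 * s))"
proof (cases "y = 0")
  case True
  then have "(\<integral>\<^sup>+\<omega>. ennreal (norm (y - oproj (V \<omega>) y) powr (2 * s)) \<partial>M) = (\<integral>\<^sup>+\<omega>. 0 \<partial>M)"
    by (intro nn_integral_cong) (simp add: oproj_zero[OF Hsubspace_random[OF V]])
  then show ?thesis
    by simp
next
  case False
  define r where "r = norm y"
  define u where "u = (1 / r) *\<^sub>R y"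
  have r: "0 < r"
    using False by (simp add: r_def)
  have u: "u \<in> Hspace K" "norm u = 1" and y_eq: "y = r *\<^sub>R u"
    using y r by (simp_all add: u_def r_def Hspace_scaleR)
  let ?f = "\<lambda>\<omega>. (1 - (norm (oproj (V \<omega>) u))\<^sup>2) powr s"
  have scaled: "norm (y - oproj (V \<omega>) y) powr (2 * s) = r powr (2 * s) * ?f \<omega>"
    if "\<omega> \<in> space M" for \<omega>
  proof -
    have HV: "Hsubspace K (V \<omega>)"
      using Hsubspace_random[OF V that] .
    have "y - oproj (V \<omega>) y = r *\<^sub>R (u - oproj (V \<omega>) u)"
      unfolding y_eq oproj_scaleR[OF HV u(1)] by (simp add: algebra_simps)
    then have "norm (y - oproj (V \<omega>) y) powr (2 * s) = r powr (2 * s) * norm (u - oproj (V \<omega>) u) powr (2 * s)"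
      using r by (simp add: powr_mult)
    then show ?thesis
      by (simp add: powr_mult_2 one_minus_norm_oproj_sq[OF HV u])
  qed
  have "(\<integral>\<^sup>+\<omega>. ennreal (norm (y - oproj (V \<omega>) y) powr (2 * s)) \<partial>M)
        = (\<integral>\<^sup>+\<omega>. ennreal (r powr (2 * s) * ?f \<omega>) \<partial>M)"
    by (intro nn_integral_cong) (simp add: scaled)
  also have "\<dots> = ennreal (r powr (2 * s) * (\<integral>\<omega>. ?f \<omega> \<partial>M))"
    using integrable_kaczmarz_integrand[OF V s u] by (subst nn_integral_eq_integral) auto
  also have "\<dots> \<le> ennreal (r powr (2 * s) * kaczmarz_bound M K s V powr s)"
    using integral_le_kaczmarz_bound[OF V s u] by (intro ennreal_leI mult_left_mono) auto
  finally show ?thesis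
    by (simp add: r_def mult.commute)
qed

end

locale independent_subspaces = subspace_prob_space K M
  for K :: "complex set" and M :: "'w measure" +
  fixes W :: "nat \<Rightarrow> 'w \<Rightarrow> (complex ^ 'd) set"
  assumes indep: "indep_vars (\<lambda>_. subspaces K) W {1..}"
begin

lemma W_measurable: "n \<ge> 1 \<Longrightarrow> W n \<in> measurable M (subspaces K)"
  using indep unfolding indep_vars_def2 by simp

lemma Hsubspace_W: "n \<ge> 1 \<Longrightarrow> \<omega> \<in> space M \<Longrightarrow> Hsubspace K (W n \<omega>)"
  using Hsubspace_random[OF W_measurable] .

definition W_events :: "nat \<Rightarrow> 'w set set" where
  "W_events k = {W k -` A \<inter> space M | A. A \<in> sets (subspaces K :: (complex ^ 'd) set measure)}"

lemma Int_stable_W_events: "Int_stable (W_events k)"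
proof (rule Int_stableI)
  fix a b assume "a \<in> W_events k" "b \<in> W_events k"
  then obtain A B where "A \<in> sets (subspaces K)" "a = W k -` A \<inter> space M"
    and "B \<in> sets (subspaces K)" "b = W k -` B \<inter> space M"
    unfolding W_events_def by blast
  then have "A \<inter> B \<in> sets (subspaces K)" "a \<inter> b = W k -` (A \<inter> B) \<inter> space M"
    by auto
  then show "a \<inter> b \<in> W_events k"
    unfolding W_events_def by blast
qed

lemma space_history: "space (history M K W n) = space M"
  unfolding history_def by (simp add: space_measure_of_conv)

lemma sets_history: "sets (history M K W n) = sigma_sets (space M) (\<Union>k\<in>{1..n}. W_events k)"
  unfolding history_def W_events_def by (subst sets_measure_of) auto

lemma sets_history_subset: "sets (history M K W n) \<subseteq> sets M"
  unfolding sets_history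
  by (intro sets.sigma_sets_subset UN_least) (auto simp: W_events_def intro: measurable_sets[OF W_measurable])

lemma measurable_history_imp_measurable:
  "f \<in> measurable (history M K W n) N \<Longrightarrow> f \<in> measurable M N"
  using sets_history_subset[of n] unfolding measurable_def space_history by blast

lemma measurable_history_mono:
  assumes "m \<le> n" "f \<in> measurable (history M K W m) N"
  shows "f \<in> measurable (history M K W n) N"
proof -
  have "sets (history M K W m) \<subseteq> sets (history M K W n)"
    unfolding sets_history using assms(1) by (intro sigma_sets_subseteq UN_mono) auto
  then show ?thesis
    using assms(2) unfolding measurable_def space_history by blast
qed

lemma W_measurable_history:
  assumes "1 \<le> k" "k \<le> n"
  shows "W k \<in> measurable (history M K W n) (subspaces K)"
proof (rule measurableI)
  show "W k x \<in> space (subspaces K)" if "x \<in> space (history M K W n)" for x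
    using that measurable_space[OF W_measurable[OF assms(1)]] by (simp add: space_history)
  fix A :: "(complex ^ 'd) set set" assume "A \<in> sets (subspaces K)"
  then have "W k -` A \<inter> space M \<in> W_events k"
    unfolding W_events_def by blast
  then have "W k -` A \<inter> space M \<in> (\<Union>k\<in>{1..n}. W_events k)"
    using assms by (intro UN_I[of k]) auto
  then show "W k -` A \<inter> space (history M K W n) \<in> sets (history M K W n)"
    unfolding sets_history space_history by (rule sigma_sets.Basic)
qed

lemma indep_set_history_W:
  assumes n: "n \<ge> 1" and Y: "Y \<in> measurable (history M K W (n - 1)) N"
  shows "indep_set (sigma_sets (space M) {Y -` A \<inter> space M | A. A \<in> sets N})
           (sigma_sets (space M) {W n -` B \<inter> space M | B. B \<in> sets (subspaces K)})"
proof -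
  define I where "I = (\<lambda>b::bool. if b then {1..n - 1} else {n})"
  have "indep_sets W_events {1..}"
    using indep unfolding indep_vars_def2 W_events_def by simp
  then have "indep_sets W_events (\<Union>b. I b)"
    by (rule indep_sets_mono_index[rotated]) (use n in \<open>auto simp: I_def\<close>)
  then have "indep_sets (\<lambda>b. sigma_sets (space M) (\<Union>i\<in>I b. W_events i)) UNIV"
    by (rule indep_sets_collect_sigma) (auto simp: Int_stable_W_events I_def disjoint_family_on_def)
  then have past_future: "indep_set (sets (history M K W (n - 1))) (sigma_sets (space M) (W_events n))"
    unfolding indep_set_def sets_history I_def by (rule indep_sets_mono_sets) (auto split: bool.split)
  have "{Y -` A \<inter> space M | A. A \<in> sets N} \<subseteq> sets (history M K W (n - 1))"
    using measurable_sets[OF Y] by (auto simp: space_history)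
  then have past_Y: "sigma_sets (space M) {Y -` A \<inter> space M | A. A \<in> sets N} \<subseteq> sets (history M K W (n - 1))"
    using sets.sigma_sets_subset[of _ "history M K W (n - 1)"] by (simp add: space_history)
  show ?thesis
    using past_future unfolding indep_set_def W_events_def
    by (rule indep_sets_mono_sets) (use past_Y in \<open>simp split: bool.split\<close>)
qed

text \<open>Fubini over the independent pair \<open>(Y, W n)\<close>, then the Kaczmarz bound for each
  fixed value of \<open>Y\<close>.\<close>

lemma nn_integral_kaczmarz_step:
  assumes n: "n \<ge> 1" and s: "0 < s"
    and Y: "Y \<in> borel_measurable (history M K W (n - 1))"
    and Y_in: "\<And>\<omega>. \<omega> \<in> space M \<Longrightarrow> Y \<omega> \<in> Hspace K"
  shows "(\<integral>\<^sup>+\<omega>. ennreal (norm (Y \<omega> - oproj (W n \<omega>) (Y \<omega>)) powr (2 * s)) \<partial>M)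
         \<le> ennreal (kaczmarz_bound M K s (W n) powr s) * (\<integral>\<^sup>+\<omega>. ennreal (norm (Y \<omega>) powr (2 * s)) \<partial>M)"
proof -
  define h where "h = (\<lambda>p :: (complex ^ 'd) \<times> (complex ^ 'd) set.
    ennreal (norm (fst p - proj_by_basis (snd p) (fst p)) powr (2 * s)))"
  have h: "h \<in> borel_measurable (borel \<Otimes>\<^sub>M subspaces K)"
    unfolding h_def by measurable
  have h_eq: "h (y, W n \<omega>) = ennreal (norm (y - oproj (W n \<omega>) y) powr (2 * s))"
    if "y \<in> Hspace K" "\<omega> \<in> space M" for y \<omega>
    using proj_by_basis_eq[OF Hsubspace_W[OF n that(2)] that(1)] by (simp add: h_def)
  have "(\<integral>\<^sup>+\<omega>. ennreal (norm (Y \<omega> - oproj (W n \<omega>) (Y \<omega>)) powr (2 * s)) \<partial>M)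
        = (\<integral>\<^sup>+\<omega>. h (Y \<omega>, W n \<omega>) \<partial>M)"
    by (intro nn_integral_cong) (simp add: h_eq Y_in)
  also have "\<dots> = (\<integral>\<^sup>+\<omega>. (\<integral>\<^sup>+\<omega>'. h (Y \<omega>, W n \<omega>') \<partial>M) \<partial>M)"
    using measurable_history_imp_measurable[OF Y] W_measurable[OF n]
    by (intro nn_integral_indep_pair[OF _ _ indep_set_history_W[OF n Y] h])
  also have "\<dots> \<le> (\<integral>\<^sup>+\<omega>. ennreal (kaczmarz_bound M K s (W n) powr s) * ennreal (norm (Y \<omega>) powr (2 * s)) \<partial>M)"
  proof (intro nn_integral_mono)
    fix \<omega> assume "\<omega> \<in> space M"
    then have "(\<integral>\<^sup>+\<omega>'. h (Y \<omega>, W n \<omega>') \<partial>M)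
               = (\<integral>\<^sup>+\<omega>'. ennreal (norm (Y \<omega> - oproj (W n \<omega>') (Y \<omega>)) powr (2 * s)) \<partial>M)"
      by (intro nn_integral_cong) (simp add: h_eq Y_in)
    also have "\<dots> \<le> ennreal (kaczmarz_bound M K s (W n) powr s * norm (Y \<omega>) powr (2 * s))"
      using \<open>\<omega> \<in> space M\<close> by (intro nn_integral_residual_le W_measurable n s Y_in)
    finally show "(\<integral>\<^sup>+\<omega>'. h (Y \<omega>, W n \<omega>') \<partial>M)
                  \<le> ennreal (kaczmarz_bound M K s (W n) powr s) * ennreal (norm (Y \<omega>) powr (2 * s))"
      by (simp add: ennreal_mult)
  qed
  also have "\<dots> = ennreal (kaczmarz_bound M K s (W n) powr s) * (\<integral>\<^sup>+\<omega>. ennreal (norm (Y \<omega>) powr (2 * s)) \<partial>M)"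
  proof (rule nn_integral_cmult)
    have [measurable]: "Y \<in> borel_measurable M"
      using measurable_history_imp_measurable[OF Y] .
    show "(\<lambda>\<omega>. ennreal (norm (Y \<omega>) powr (2 * s))) \<in> borel_measurable M"
      by measurable
  qed
  finally show ?thesis .
qed

end

section \<open>The noisy Kaczmarz iteration\<close>

locale noisy_kaczmarz = independent_subspaces K M W
  for K :: "complex set" and M :: "'w measure" and W :: "nat \<Rightarrow> 'w \<Rightarrow> (complex ^ 'd) set" +
  fixes s \<alpha> \<epsilon> :: real and noise xs :: "nat \<Rightarrow> 'w \<Rightarrow> complex ^ 'd" and x x0 :: "complex ^ 'd"
  assumes x_in_Hspace: "x \<in> Hspace K" and x0_in_Hspace: "x0 \<in> Hspace K"
    and s_pos: "s > 0"
    and kaczmarz_bound_W: "\<forall>n\<ge>1. kaczmarz_bound M K s (W n) = \<alpha>"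
    and \<alpha>_pos: "0 < \<alpha>" and \<alpha>_less_1: "\<alpha> < 1"
    and \<epsilon>_nonneg: "\<epsilon> \<ge> 0"
    and noise_measurable: "\<forall>n\<ge>1. noise n \<in> borel_measurable (history M K W n)"
    and noise_bounded: "\<forall>n\<ge>1. \<forall>\<omega>\<in>space M. noise n \<omega> \<in> W n \<omega> \<and> norm (noise n \<omega>) \<le> \<epsilon>"
    and xs_0: "\<forall>\<omega>\<in>space M. xs 0 \<omega> = x0"
    and xs_step: "\<forall>n\<ge>1. \<forall>\<omega>\<in>space M. xs n \<omega> =
           xs (n - 1) \<omega> + (oproj (W n \<omega>) x + noise n \<omega>) - oproj (W n \<omega>) (xs (n - 1) \<omega>)"
begin

abbreviation error_moment :: "nat \<Rightarrow> real" where
  "error_moment n \<equiv> \<integral>\<omega>. norm (xs n \<omega> - x) powr (2 * s) \<partial>M"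

abbreviation residual :: "nat \<Rightarrow> 'w \<Rightarrow> complex ^ 'd" where
  "residual n \<omega> \<equiv> (xs (n - 1) \<omega> - x) - oproj (W n \<omega>) (xs (n - 1) \<omega> - x)"

lemma xs_in_Hspace: "\<omega> \<in> space M \<Longrightarrow> xs n \<omega> \<in> Hspace K"
proof (induction n)
  case 0
  then show ?case
    using xs_0 x0_in_Hspace by simp
next
  case (Suc n)
  have V: "Hsubspace K (W (Suc n) \<omega>)"
    using Hsubspace_W Suc.prems by simp
  have "noise (Suc n) \<omega> \<in> Hspace K"
    using noise_bounded Suc.prems Hsubspace_subset_Hspace[OF V] by auto
  then show ?case
    using xs_step Suc
    by (auto intro!: Hspace_add Hspace_diff oproj_in_Hspace[OF V] x_in_Hspace)
qed

lemma error_eq_residual_add_noise: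
  assumes n: "n \<ge> 1" and \<omega>: "\<omega> \<in> space M"
  shows "xs n \<omega> - x = residual n \<omega> + noise n \<omega>"
proof -
  have step: "xs n \<omega> = xs (n - 1) \<omega> + (oproj (W n \<omega>) x + noise n \<omega>) - oproj (W n \<omega>) (xs (n - 1) \<omega>)"
    using xs_step n \<omega> by blast
  show ?thesis
    unfolding oproj_diff[OF Hsubspace_W[OF n \<omega>] xs_in_Hspace[OF \<omega>] x_in_Hspace]
    by (subst step) (simp add: algebra_simps)
qed

lemma norm_error_sq:
  assumes n: "n \<ge> 1" and \<omega>: "\<omega> \<in> space M"
  shows "(norm (xs n \<omega> - x))\<^sup>2 = (norm (residual n \<omega>))\<^sup>2 + (norm (noise n \<omega>))\<^sup>2"
proof -
  have "orthogonal (residual n \<omega>) (noise n \<omega>)"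
    using noise_bounded n \<omega>
    by (intro oproj_orthogonal Hsubspace_W Hspace_diff xs_in_Hspace x_in_Hspace) auto
  then show ?thesis
    by (simp add: error_eq_residual_add_noise[OF n \<omega>] norm_add_Pythagorean)
qed

lemma norm_residual_sq_le:
  assumes n: "n \<ge> 1" and \<omega>: "\<omega> \<in> space M"
  shows "(norm (residual n \<omega>))\<^sup>2 \<le> (norm (xs (n - 1) \<omega> - x))\<^sup>2"
  using norm_oproj_Pythagorean[OF Hsubspace_W[OF n \<omega>] Hspace_diff[OF xs_in_Hspace[OF \<omega>] x_in_Hspace]]
  by simp

text \<open>A crude deterministic bound on the error, giving integrability of all its moments.\<close>

lemma norm_error_sq_le: "\<omega> \<in> space M \<Longrightarrow> (norm (xs n \<omega> - x))\<^sup>2 \<le> (norm (x0 - x))\<^sup>2 + real n * \<epsilon>\<^sup>2"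
proof (induction n)
  case 0
  then show ?case
    using xs_0 by simp
next
  case (Suc n)
  let ?r = "xs n \<omega> - x - oproj (W (Suc n) \<omega>) (xs n \<omega> - x)"
  have "(norm (noise (Suc n) \<omega>))\<^sup>2 \<le> \<epsilon>\<^sup>2"
    using noise_bounded Suc.prems by (intro power_mono) auto
  moreover have "(norm (xs (Suc n) \<omega> - x))\<^sup>2 = (norm ?r)\<^sup>2 + (norm (noise (Suc n) \<omega>))\<^sup>2"
    using norm_error_sq[of "Suc n" \<omega>] Suc.prems by simp
  moreover have "(norm ?r)\<^sup>2 \<le> (norm (xs n \<omega> - x))\<^sup>2"
    using norm_residual_sq_le[of "Suc n" \<omega>] Suc.prems by simp
  moreover have "real (Suc n) * \<epsilon>\<^sup>2 = real n * \<epsilon>\<^sup>2 + \<epsilon>\<^sup>2"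
    by (simp add: algebra_simps)
  ultimately show ?case
    using Suc by linarith
qed

lemma xs_measurable_history: "xs n \<in> borel_measurable (history M K W n)"
proof (induction n)
  case 0
  show ?case
    using xs_0 by (subst measurable_cong[where g = "\<lambda>_. x0"]) (simp_all add: space_history)
next
  case (Suc n)
  let ?H = "history M K W (Suc n)"
  have [measurable]: "xs n \<in> borel_measurable ?H"
    using measurable_history_mono[OF _ Suc.IH] by simp
  have [measurable]: "noise (Suc n) \<in> borel_measurable ?H"
    using noise_measurable by simp
  have W: "(\<lambda>\<omega>. (y \<omega>, W (Suc n) \<omega>)) \<in> measurable ?H (borel \<Otimes>\<^sub>M subspaces K)"
    if "y \<in> borel_measurable ?H" for y
    using that W_measurable_history[of "Suc n" "Suc n"] by (intro measurable_Pair) auto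
  have [measurable]: "(\<lambda>\<omega>. proj_by_basis (W (Suc n) \<omega>) (y \<omega>)) \<in> borel_measurable ?H"
    if "y \<in> borel_measurable ?H" for y
    using measurable_compose[OF W[OF that] proj_by_basis_measurable] by simp
  have "xs (Suc n) \<omega> = xs n \<omega> + (proj_by_basis (W (Suc n) \<omega>) x + noise (Suc n) \<omega>)
                        - proj_by_basis (W (Suc n) \<omega>) (xs n \<omega>)"
    if "\<omega> \<in> space ?H" for \<omega>
  proof -
    have \<omega>: "\<omega> \<in> space M"
      using that by (simp add: space_history)
    then have V: "Hsubspace K (W (Suc n) \<omega>)"
      by (intro Hsubspace_W) auto
    then show ?thesis
      using xs_step \<omega> by (simp add: proj_by_basis_eq x_in_Hspace xs_in_Hspace)
  qed
  then show ?case
    by (subst measurable_cong) (assumption, measurable)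
qed

lemma residual_measurable:
  assumes n: "n \<ge> 1"
  shows "residual n \<in> borel_measurable M"
proof -
  have [measurable]: "xs (n - 1) \<in> borel_measurable M"
    using measurable_history_imp_measurable[OF xs_measurable_history] .
  have "(\<lambda>\<omega>. (xs (n - 1) \<omega> - x, W n \<omega>)) \<in> measurable M (borel \<Otimes>\<^sub>M subspaces K)"
    using W_measurable[OF n] by (intro measurable_Pair) measurable
  from measurable_compose[OF this proj_by_basis_measurable]
  have [measurable]: "(\<lambda>\<omega>. proj_by_basis (W n \<omega>) (xs (n - 1) \<omega> - x)) \<in> borel_measurable M"
    by simp
  have "(\<lambda>\<omega>. xs (n - 1) \<omega> - x - proj_by_basis (W n \<omega>) (xs (n - 1) \<omega> - x)) \<in> borel_measurable M"
    by measurable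
  moreover have "proj_by_basis (W n \<omega>) (xs (n - 1) \<omega> - x) = oproj (W n \<omega>) (xs (n - 1) \<omega> - x)"
    if "\<omega> \<in> space M" for \<omega>
    using that n by (intro proj_by_basis_eq Hsubspace_W Hspace_diff xs_in_Hspace x_in_Hspace)
  ultimately show ?thesis
    by (subst measurable_cong[symmetric]) auto
qed

lemma integrable_error_moment: "integrable M (\<lambda>\<omega>. norm (xs n \<omega> - x) powr (2 * s))"
proof (rule integrable_const_bound[where B = "((norm (x0 - x))\<^sup>2 + real n * \<epsilon>\<^sup>2) powr s"])
  show "AE \<omega> in M. norm (norm (xs n \<omega> - x) powr (2 * s)) \<le> ((norm (x0 - x))\<^sup>2 + real n * \<epsilon>\<^sup>2) powr s"
    using norm_error_sq_le s_pos by (intro AE_I2) (simp add: powr_mult_2 powr_mono2)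
  have [measurable]: "xs n \<in> borel_measurable M"
    using measurable_history_imp_measurable[OF xs_measurable_history] .
  show "(\<lambda>\<omega>. norm (xs n \<omega> - x) powr (2 * s)) \<in> borel_measurable M"
    by measurable
qed

lemma integrable_residual_moment:
  assumes n: "n \<ge> 1"
  shows "integrable M (\<lambda>\<omega>. norm (residual n \<omega>) powr (2 * s))"
proof (rule integrable_const_bound[where B = "((norm (x0 - x))\<^sup>2 + real (n - 1) * \<epsilon>\<^sup>2) powr s"])
  show "AE \<omega> in M. norm (norm (residual n \<omega>) powr (2 * s)) \<le> ((norm (x0 - x))\<^sup>2 + real (n - 1) * \<epsilon>\<^sup>2) powr s"
    using order_trans[OF norm_residual_sq_le[OF n] norm_error_sq_le] s_pos
    by (intro AE_I2) (simp add: powr_mult_2 powr_mono2)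
  show "(\<lambda>\<omega>. norm (residual n \<omega>) powr (2 * s)) \<in> borel_measurable M"
    using residual_measurable[OF n] by measurable
qed

lemma residual_moment_le:
  assumes n: "n \<ge> 1"
  shows "(\<integral>\<omega>. norm (residual n \<omega>) powr (2 * s) \<partial>M) \<le> \<alpha> powr s * error_moment (n - 1)"
proof -
  have "ennreal (\<integral>\<omega>. norm (residual n \<omega>) powr (2 * s) \<partial>M)
        = (\<integral>\<^sup>+\<omega>. ennreal (norm (residual n \<omega>) powr (2 * s)) \<partial>M)"
    using integrable_residual_moment[OF n] by (simp add: nn_integral_eq_integral)
  also have "\<dots> \<le> ennreal (\<alpha> powr s) * (\<integral>\<^sup>+\<omega>. ennreal (norm (xs (n - 1) \<omega> - x) powr (2 * s)) \<partial>M)"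
    using nn_integral_kaczmarz_step[OF n s_pos, of "\<lambda>\<omega>. xs (n - 1) \<omega> - x"] kaczmarz_bound_W n
      xs_measurable_history xs_in_Hspace x_in_Hspace
    by (simp add: Hspace_diff)
  also have "\<dots> = ennreal (\<alpha> powr s * error_moment (n - 1))"
    using integrable_error_moment by (simp add: nn_integral_eq_integral ennreal_mult)
  finally show ?thesis
    by (simp add: ennreal_le_iff integral_nonneg_AE)
qed

lemma error_powr_le:
  assumes n: "n \<ge> 1" and \<omega>: "\<omega> \<in> space M"
  shows "norm (xs n \<omega> - x) powr (2 * s) \<le> ((norm (residual n \<omega>))\<^sup>2 + \<epsilon>\<^sup>2) powr s"
proof -
  have "(norm (noise n \<omega>))\<^sup>2 \<le> \<epsilon>\<^sup>2"
    using noise_bounded n \<omega> by (intro power_mono) auto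
  then show ?thesis
    using norm_error_sq[OF n \<omega>] s_pos by (simp add: powr_mult_2 powr_mono2)
qed

lemma error_moment_step_le1:
  assumes s: "s \<le> 1" and n: "n \<ge> 1"
  shows "error_moment n \<le> \<alpha> powr s * error_moment (n - 1) + \<epsilon> powr (2 * s)"
proof -
  have "norm (xs n \<omega> - x) powr (2 * s) \<le> norm (residual n \<omega>) powr (2 * s) + \<epsilon> powr (2 * s)"
    if "\<omega> \<in> space M" for \<omega>
    using order_trans[OF error_powr_le[OF n that] powr_add_le_add_powr[of _ "\<epsilon>\<^sup>2"]] s_pos s \<epsilon>_nonneg
    by (simp add: powr_mult_2)
  then have "error_moment n \<le> (\<integral>\<omega>. norm (residual n \<omega>) powr (2 * s) + \<epsilon> powr (2 * s) \<partial>M)"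
    using integrable_error_moment integrable_residual_moment[OF n] by (intro integral_mono) auto
  also have "\<dots> = (\<integral>\<omega>. norm (residual n \<omega>) powr (2 * s) \<partial>M) + \<epsilon> powr (2 * s)"
    using integrable_residual_moment[OF n] by (simp add: prob_space)
  finally show ?thesis
    using residual_moment_le[OF n] by simp
qed

lemma error_moment_step_ge1:
  assumes s: "1 \<le> s" and n: "n \<ge> 1"
  shows "error_moment n powr (1 / s) \<le> \<alpha> * error_moment (n - 1) powr (1 / s) + \<epsilon>\<^sup>2"
proof -
  let ?f = "\<lambda>\<omega>. (norm (residual n \<omega>))\<^sup>2"
  have f: "?f \<in> borel_measurable M"
    using residual_measurable[OF n] by measurable
  have f_int: "integrable M (\<lambda>\<omega>. ?f \<omega> powr s)"
    using integrable_residual_moment[OF n] by (simp add: powr_mult_2)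
  define a where "a = \<alpha> * error_moment (n - 1) powr (1 / s)"
  have a: "0 \<le> a"
    using \<alpha>_pos by (simp add: a_def)
  have f_le: "(\<integral>\<omega>. ?f \<omega> powr s \<partial>M) \<le> a powr s"
    using residual_moment_le[OF n] \<alpha>_pos s
    by (simp add: a_def powr_mult_2 powr_mult powr_powr integral_nonneg_AE)
  have "error_moment n \<le> (\<integral>\<omega>. (?f \<omega> + \<epsilon>\<^sup>2) powr s \<partial>M)"
    using integrable_error_moment integrable_powr_add_const[OF f _ f_int s] error_powr_le[OF n]
    by (intro integral_mono) auto
  also have "\<dots> \<le> (a + \<epsilon>\<^sup>2) powr s"
    by (rule integral_powr_add_const_le[OF f _ f_int s _ a f_le]) simp_all
  finally have "error_moment n powr (1 / s) \<le> ((a + \<epsilon>\<^sup>2) powr s) powr (1 / s)"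
    using s by (intro powr_mono2) (auto intro: integral_nonneg_AE)
  then show ?thesis
    using s a by (simp add: powr_powr a_def)
qed

lemma error_moment_0: "error_moment 0 = norm (x0 - x) powr (2 * s)"
  using xs_0 by (simp add: Bochner_Integration.integral_cong[of M M _ "\<lambda>_. norm (x0 - x) powr (2 * s)"] prob_space)

lemma error_moment_bound_le1:
  assumes "s \<le> 1"
  shows "error_moment n \<le> \<alpha> powr (real n * s) * norm (x0 - x) powr (2 * s) + 1 / (1 - \<alpha> powr s) * \<epsilon> powr (2 * s)"
proof -
  have "\<alpha> powr s < 1"
    using powr_less_mono2[OF s_pos _ \<alpha>_less_1] \<alpha>_pos by simp
  then have "error_moment n \<le> (\<alpha> powr s) ^ n * error_moment 0 + \<epsilon> powr (2 * s) / (1 - \<alpha> powr s)"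
    using error_moment_step_le1[OF assms, of "Suc _"] by (intro linear_recurrence_bound) auto
  moreover have "(\<alpha> powr s) ^ n = \<alpha> powr (real n * s)"
    using \<alpha>_pos by (simp add: powr_realpow[symmetric] powr_powr mult.commute)
  ultimately show ?thesis
    by (simp add: error_moment_0)
qed

lemma error_moment_bound_ge1:
  assumes "1 \<le> s"
  shows "error_moment n powr (1 / s) \<le> \<alpha> ^ n * (norm (x0 - x))\<^sup>2 + 1 / (1 - \<alpha>) * \<epsilon>\<^sup>2"
proof -
  have "error_moment n powr (1 / s) \<le> \<alpha> ^ n * error_moment 0 powr (1 / s) + \<epsilon>\<^sup>2 / (1 - \<alpha>)"
    using error_moment_step_ge1[OF assms, of "Suc _"] \<alpha>_pos \<alpha>_less_1
    by (intro linear_recurrence_bound[where a = "\<lambda>n. error_moment n powr (1 / s)"]) auto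
  moreover have "error_moment 0 powr (1 / s) = (norm (x0 - x))\<^sup>2"
    using s_pos by (simp add: error_moment_0 powr_powr powr_mult_2[symmetric])
  ultimately show ?thesis
    by simp
qed

end

theorem theorem3p3:
  fixes M :: "'w measure" and K :: "complex set"
    and W :: "nat \<Rightarrow> 'w \<Rightarrow> (complex ^ 'd) set"
    and noise :: "nat \<Rightarrow> 'w \<Rightarrow> complex ^ 'd"
    and xs :: "nat \<Rightarrow> 'w \<Rightarrow> complex ^ 'd"
    and x x0 :: "complex ^ 'd" and s \<alpha> \<epsilon> :: real
  assumes "prob_space M"
    and "K = \<real> \<or> K = UNIV"
    and "x \<in> Hspace K" and "x0 \<in> Hspace K"
    and "prob_space.indep_vars M (\<lambda>_. subspaces K) W {1..}"
    and "s > 0"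
    and "\<forall>n\<ge>1. kaczmarz_bound M K s (W n) = \<alpha>"
    and "0 < \<alpha>" and "\<alpha> < 1"
    and "\<epsilon> \<ge> 0"
    and "\<forall>n\<ge>1. noise n \<in> borel_measurable (history M K W n)"
    and "\<forall>n\<ge>1. \<forall>\<omega>\<in>space M. noise n \<omega> \<in> W n \<omega> \<and> norm (noise n \<omega>) \<le> \<epsilon>"
    and "\<forall>\<omega>\<in>space M. xs 0 \<omega> = x0"
    and "\<forall>n\<ge>1. \<forall>\<omega>\<in>space M. xs n \<omega> =
           xs (n - 1) \<omega> + (oproj (W n \<omega>) x + noise n \<omega>) - oproj (W n \<omega>) (xs (n - 1) \<omega>)"
  shows "(s \<le> 1 \<longrightarrow> (\<forall>n. (\<integral>\<omega>. norm (xs n \<omega> - x) powr (2 * s) \<partial>M)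
            \<le> \<alpha> powr (real n * s) * norm (x0 - x) powr (2 * s)
               + 1 / (1 - \<alpha> powr s) * \<epsilon> powr (2 * s)))
       \<and> (s \<ge> 1 \<longrightarrow> (\<forall>n. (\<integral>\<omega>. norm (xs n \<omega> - x) powr (2 * s) \<partial>M) powr (1 / s)
            \<le> \<alpha> ^ n * (norm (x0 - x))\<^sup>2 + 1 / (1 - \<alpha>) * \<epsilon>\<^sup>2))"
proof -
  interpret noisy_kaczmarz K M W s \<alpha> \<epsilon> noise xs x x0
    unfolding noisy_kaczmarz_def noisy_kaczmarz_axioms_def independent_subspaces_def
      independent_subspaces_axioms_def subspace_prob_space_def scalar_field_def
    using assms by blast
  show ?thesis
    using error_moment_bound_le1 error_moment_bound_ge1 by blast
qed

end
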